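(* Fix $\Delta>1$ and a known upper bound $D$ on the sparsity. Let $M\in\mathbb{F}^{m\times n}$ be a matrix such that there exists a (deterministic) decoder which, from observing only $\mathbf{b}=M\odot\mathbf{x}$, produces a $\Delta$-approximation $\hat d$ of $d=\|\mathbf{x}\|_0$ for any $\mathbf{x}\in\mathbb{F}^n$ with $d\le D$. Then for any two vectors $\mathbf{v}_1,\mathbf{v}_2\in\mathbb{F}^n$ with $\|\mathbf{v}_2\|_0\le\|\mathbf{v}_1\|_0\le D$, $M$ must have the property $$\frac{\|\mathbf{v}_1\|_0}{\|\mathbf{v}_2\|_0}>\Delta^2\ \Longrightarrow\ M\odot\mathbf{v}_1\neq M\odot\mathbf{v}_2.$$ Conversely, for any matrix $M$ satisfying this property, there exists a decoder producing from $\mathbf{b}=M\odot\mathbf{x}$ an estimate $\hat d$ satisfying $\frac{1}{\Delta}\le\frac{\hat d}{d}\le\Delta$.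
   Context: $\|\mathbf{x}\|_0$ denotes the number of nonzero entries (sparsity) of $\mathbf{x}$. The measurement operation $\odot$ is one of: (i) $\mathbb{F}=\mathbb{F}_2$ and $\odot$ is logical OR, i.e. $(M\odot\mathbf{x})_i=\bigvee_{j:M_{ij}=1}\mathbf{x}_j$ (group testing); or (ii) $\mathbb{F}$ is a finite field or $\mathbb{R}$ and $M\odot\mathbf{x}$ is the ordinary matrix-vector product over $\mathbb{F}$. A decoder is a deterministic function of the observed vector $\mathbf{b}$; an estimate $\hat d$ is a $\Delta$-approximation of $d$ if $\frac{1}{\Delta}\le \frac{\hat d}{d}\le\Delta$. *)

theory Defs
  imports "HOL-Analysis.Analysis"
begin

definition sparsity :: "'a::zero ^ 'n \<Rightarrow> nat" where
  "sparsity x = card {j. x $ j \<noteq> 0}"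

definition bsparsity :: "bool ^ 'n \<Rightarrow> nat" where
  "bsparsity x = card {j. x $ j}"

text \<open>Group-testing measurement: Boolean OR of the entries selected by each row.\<close>
definition or_mult :: "bool ^ 'n ^ 'm \<Rightarrow> bool ^ 'n \<Rightarrow> bool ^ 'm" where
  "or_mult M x = (\<chi> i. \<exists>j. M $ i $ j \<and> x $ j)"

text \<open>dhat is a Delta-approximation of d: 1/Delta <= dhat/d <= Delta, written
  multiplicatively (for d = 0 this forces dhat = 0).\<close>
definition is_approx :: "real \<Rightarrow> real \<Rightarrow> real \<Rightarrow> bool" where
  "is_approx \<Delta> dhat d \<longleftrightarrow> dhat \<le> \<Delta> * d \<and> d \<le> \<Delta> * dhat"

definition estimable :: "real \<Rightarrow> nat \<Rightarrow> ('v \<Rightarrow> 'b) \<Rightarrow> ('v \<Rightarrow> nat) \<Rightarrow> bool" where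
  "estimable \<Delta> D meas spars \<longleftrightarrow>
     (\<exists>dec :: 'b \<Rightarrow> real. \<forall>x. spars x \<le> D \<longrightarrow> is_approx \<Delta> (dec (meas x)) (real (spars x)))"

text \<open>The separation property: ||v2|| <= ||v1|| <= D and ||v1||/||v2|| > Delta^2
  (written as ||v1|| > Delta^2 ||v2||, so ||v2|| = 0 < ||v1|| counts as ratio infinity)
  imply different measurements.\<close>
definition separating :: "real \<Rightarrow> nat \<Rightarrow> ('v \<Rightarrow> 'b) \<Rightarrow> ('v \<Rightarrow> nat) \<Rightarrow> bool" where
  "separating \<Delta> D meas spars \<longleftrightarrow>
     (\<forall>v1 v2. spars v2 \<le> spars v1 \<and> spars v1 \<le> D \<and> real (spars v1) > \<Delta>^2 * real (spars v2)
        \<longrightarrow> meas v1 \<noteq> meas v2)"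

end

theory Submission
  imports Defs
begin

text \<open>Nothing about the measurement map is used: the theorem holds for any map and any
  sparsity function. If a decoder exists and two vectors share a measurement, its common
  estimate is within a factor \<Delta> of both sparsities, so they are within \<Delta>^2 of each other.
  Conversely, if measurements separate sparsities differing by more than \<Delta>^2, the decoder
  returning \<Delta> times the smallest sparsity consistent with the observation is a
  \<Delta>-approximation.\<close>

definition min_consistent_sparsity :: "nat \<Rightarrow> ('v \<Rightarrow> 'b) \<Rightarrow> ('v \<Rightarrow> nat) \<Rightarrow> 'b \<Rightarrow> nat" where
  "min_consistent_sparsity D meas spars b = Min {spars x | x. meas x = b \<and> spars x \<le> D}"

lemma min_consistent_sparsity_le:
  assumes "spars x \<le> D"
  shows "min_consistent_sparsity D meas spars (meas x) \<le> spars x"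
  unfolding min_consistent_sparsity_def
  by (rule Min_le) (use assms in \<open>auto intro: finite_subset[of _ "{..D}"]\<close>)

lemma min_consistent_sparsity_attained:
  assumes "spars x \<le> D"
  obtains y where "meas y = meas x" "spars y \<le> D"
    "spars y = min_consistent_sparsity D meas spars (meas x)"
proof -
  let ?S = "{spars y | y. meas y = meas x \<and> spars y \<le> D}"
  have "finite ?S" by (rule finite_subset[of _ "{..D}"]) auto
  moreover have "?S \<noteq> {}" using assms by auto
  ultimately have "Min ?S \<in> ?S" by (rule Min_in)
  then show thesis using that unfolding min_consistent_sparsity_def by auto
qed

lemma estimable_imp_separating:
  assumes "\<Delta> > 1" and "estimable \<Delta> D meas spars"
  shows "separating \<Delta> D meas spars"
  unfolding separating_def
proof (intro allI impI notI)
  obtain dec where dec: "\<And>x. spars x \<le> D \<Longrightarrow> is_approx \<Delta> (dec (meas x)) (real (spars x))"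
    using assms(2) unfolding estimable_def by blast
  fix v1 v2
  assume v: "spars v2 \<le> spars v1 \<and> spars v1 \<le> D \<and> real (spars v1) > \<Delta>^2 * real (spars v2)"
    and same: "meas v1 = meas v2"
  have "real (spars v1) \<le> \<Delta> * dec (meas v1)"
    using dec v unfolding is_approx_def by auto
  also have "\<dots> \<le> \<Delta> * (\<Delta> * real (spars v2))"
    using dec[of v2] v same assms(1) unfolding is_approx_def by (intro mult_left_mono) auto
  finally show False using v by (simp add: power2_eq_square mult.assoc)
qed

lemma separating_imp_estimable:
  assumes "\<Delta> > 1" and sep: "separating \<Delta> D meas spars"
  shows "estimable \<Delta> D meas spars"
  unfolding estimable_def
proof (intro exI allI impI)
  fix x
  assume x: "spars x \<le> D"
  let ?m = "min_consistent_sparsity D meas spars (meas x)"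
  obtain y where y: "meas y = meas x" "spars y \<le> D" "spars y = ?m"
    using min_consistent_sparsity_attained[where meas = meas and spars = spars, OF x] .
  have le: "?m \<le> spars x" using min_consistent_sparsity_le[where meas = meas and spars = spars, OF x] .
  have "\<not> real (spars x) > \<Delta>^2 * real ?m"
    using sep x y le unfolding separating_def by metis
  moreover have "\<Delta> * real ?m \<le> \<Delta> * real (spars x)"
    using le assms(1) by (intro mult_left_mono) auto
  ultimately show "is_approx \<Delta> (\<Delta> * real (min_consistent_sparsity D meas spars (meas x)))
      (real (spars x))"
    unfolding is_approx_def by (simp add: power2_eq_square mult.assoc)
qed

lemma estimable_iff_separating:
  assumes "\<Delta> > 1"
  shows "estimable \<Delta> D meas spars \<longleftrightarrow> separating \<Delta> D meas spars"
  using estimable_imp_separating separating_imp_estimable assms by blast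

theorem theorem1:
  fixes \<Delta> :: real and D :: nat
  assumes "\<Delta> > 1"
  shows "(\<forall>M :: bool ^ 'n ^ 'm.
            estimable \<Delta> D (or_mult M) bsparsity \<longleftrightarrow> separating \<Delta> D (or_mult M) bsparsity)
       \<and> (\<forall>M :: 'a::field ^ 'n ^ 'm.
            estimable \<Delta> D (\<lambda>x. M *v x) sparsity \<longleftrightarrow> separating \<Delta> D (\<lambda>x. M *v x) sparsity)"
  by (intro conjI allI estimable_iff_separating[OF assms])

end
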